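(* Let $D^p$ be an instance of a PDB schema $\mathcal{D}^p$ that is consistent w.r.t. a set $\mathcal{IC}$ of denial constraints, let $T$ be a set of tuples of $D^p$, and let $H=HG(D^p,\mathcal{IC})$. If either (i) the tuples in $T$ are pairwise disconnected in $H$, or (ii) $Int(T,H)$ is a matryoshka, then $p^{\min}(T)=\max\{0,\sum_{t\in T}p(t)-|T|+1\}$. Otherwise, $\max\{0,\sum_{t\in T}p(t)-|T|+1\}$ is a lower bound for $p^{\min}(T)$.
   Context: A PDB instance $D^p$ is a finite set of tuples, each with a probability $p(t)\in[0,1]$. Possible worlds are subsets of its tuples; an interpretation is a probability distribution $Pr$ on the possible worlds with $\sum_{w\ni t}Pr(w)=p(t)$ for each tuple $t$. Denial constraints are formulas $\forall\vec x.\neg[R_1(\vec x_1)\wedge\dots\wedge R_m(\vec x_m)\wedge\phi]$ with $\phi$ a conjunction of comparisons ($=,\neq,\le,\ge,<,>$) among variables/constants. A model w.r.t. $\mathcal{IC}$ is an interpretation giving probability $0$ to every world violating a constraint of $\mathcal{IC}$; $D^p$ is consistent if a model exists. A conflicting set is a minimal set of tuples such that every world containing it violates $\mathcal{IC}$; the conflict hypergraph $HG(D^p,\mathcal{IC})$ has the tuples as nodes and the conflicting sets as hyperedges. $p^{\min}(T)=\min_{Pr \text{ model}}\sum_{w\supseteq T}Pr(w)$. Two nodes are disconnected if no path (sequence of distinct hyperedges, consecutive ones intersecting, the first containing one node and the last the other) joins them. $Int(T,H)$ denotes the set of intersections of $T$ with the hyperedges of $H$. A set of sets is a matryoshka if it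 is totally ordered by strict inclusion. *)

theory Defs
  imports Complex_Main
begin

text \<open>A tuple is a relation name together with a list of values; values come from a
  linearly ordered domain (needed for the comparisons of denial constraints).\<close>
type_synonym ('r, 'v) tuple = "'r \<times> 'v list"

datatype ('x, 'v) trm = Var 'x | Const 'v

datatype cop = CEq | CNeq | CLe | CGe | CLt | CGt

fun cmp :: "cop \<Rightarrow> 'v::linorder \<Rightarrow> 'v \<Rightarrow> bool" where
  "cmp CEq a b = (a = b)"
| "cmp CNeq a b = (a \<noteq> b)"
| "cmp CLe a b = (a \<le> b)"
| "cmp CGe a b = (a \<ge> b)"
| "cmp CLt a b = (a < b)"
| "cmp CGt a b = (a > b)"

fun eval_trm :: "('x \<Rightarrow> 'v) \<Rightarrow> ('x, 'v) trm \<Rightarrow> 'v" where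
  "eval_trm \<sigma> (Var x) = \<sigma> x"
| "eval_trm \<sigma> (Const c) = c"

text \<open>A denial constraint  forall x. not [R1(x1) and ... and Rm(xm) and phi]:
  a list of relational atoms and a list of comparisons (the conjunction phi).\<close>
record ('r, 'x, 'v) denial =
  atoms :: "('r \<times> ('x, 'v) trm list) list"
  comps :: "(('x, 'v) trm \<times> cop \<times> ('x, 'v) trm) list"

definition violates :: "('r, 'v::linorder) tuple set \<Rightarrow> ('r, 'x, 'v) denial \<Rightarrow> bool" where
  "violates w c \<longleftrightarrow> (\<exists>\<sigma>.
      (\<forall>(R, ts) \<in> set (atoms c). (R, map (eval_trm \<sigma>) ts) \<in> w) \<and>
      (\<forall>(a, op, b) \<in> set (comps c). cmp op (eval_trm \<sigma> a) (eval_trm \<sigma> b)))"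

definition violates_IC :: "('r, 'v::linorder) tuple set \<Rightarrow> ('r, 'x, 'v) denial set \<Rightarrow> bool" where
  "violates_IC w IC \<longleftrightarrow> (\<exists>c \<in> IC. violates w c)"

definition pdb :: "('r, 'v) tuple set \<Rightarrow> (('r, 'v) tuple \<Rightarrow> real) \<Rightarrow> bool" where
  "pdb D p \<longleftrightarrow> finite D \<and> (\<forall>t \<in> D. 0 \<le> p t \<and> p t \<le> 1)"

definition is_interpretation :: "('r, 'v) tuple set \<Rightarrow> (('r, 'v) tuple \<Rightarrow> real)
    \<Rightarrow> (('r, 'v) tuple set \<Rightarrow> real) \<Rightarrow> bool" where
  "is_interpretation D p Pr \<longleftrightarrow>
     (\<forall>w \<in> Pow D. 0 \<le> Pr w) \<and> (\<Sum>w \<in> Pow D. Pr w) = 1 \<and>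
     (\<forall>t \<in> D. (\<Sum>w \<in> {w \<in> Pow D. t \<in> w}. Pr w) = p t)"

definition is_model :: "('r, 'v::linorder) tuple set \<Rightarrow> (('r, 'v) tuple \<Rightarrow> real)
    \<Rightarrow> ('r, 'x, 'v) denial set \<Rightarrow> (('r, 'v) tuple set \<Rightarrow> real) \<Rightarrow> bool" where
  "is_model D p IC Pr \<longleftrightarrow> is_interpretation D p Pr \<and>
     (\<forall>w \<in> Pow D. violates_IC w IC \<longrightarrow> Pr w = 0)"

definition consistent :: "('r, 'v::linorder) tuple set \<Rightarrow> (('r, 'v) tuple \<Rightarrow> real)
    \<Rightarrow> ('r, 'x, 'v) denial set \<Rightarrow> bool" where
  "consistent D p IC \<longleftrightarrow> (\<exists>Pr. is_model D p IC Pr)"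

definition p_min :: "('r, 'v::linorder) tuple set \<Rightarrow> (('r, 'v) tuple \<Rightarrow> real)
    \<Rightarrow> ('r, 'x, 'v) denial set \<Rightarrow> ('r, 'v) tuple set \<Rightarrow> real" where
  "p_min D p IC T = Inf {(\<Sum>w \<in> {w \<in> Pow D. T \<subseteq> w}. Pr w) | Pr. is_model D p IC Pr}"

definition forces_violation :: "('r, 'v::linorder) tuple set \<Rightarrow> ('r, 'x, 'v) denial set
    \<Rightarrow> ('r, 'v) tuple set \<Rightarrow> bool" where
  "forces_violation D IC X \<longleftrightarrow> (\<forall>w \<in> Pow D. X \<subseteq> w \<longrightarrow> violates_IC w IC)"

definition conflicting_set :: "('r, 'v::linorder) tuple set \<Rightarrow> ('r, 'x, 'v) denial set
    \<Rightarrow> ('r, 'v) tuple set \<Rightarrow> bool" where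
  "conflicting_set D IC X \<longleftrightarrow> X \<subseteq> D \<and> forces_violation D IC X \<and>
     (\<forall>Y. Y \<subset> X \<longrightarrow> \<not> forces_violation D IC Y)"

text \<open>Hyperedges of HG(D, IC) (its nodes are the tuples of D).\<close>
definition hyperedges :: "('r, 'v::linorder) tuple set \<Rightarrow> ('r, 'x, 'v) denial set
    \<Rightarrow> ('r, 'v) tuple set set" where
  "hyperedges D IC = {X. conflicting_set D IC X}"

definition connected_in :: "'a set set \<Rightarrow> 'a \<Rightarrow> 'a \<Rightarrow> bool" where
  "connected_in E t t' \<longleftrightarrow> (\<exists>es. es \<noteq> [] \<and> distinct es \<and> set es \<subseteq> E \<and>
      (\<forall>i. Suc i < length es \<longrightarrow> es ! i \<inter> es ! Suc i \<noteq> {}) \<and>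
      t \<in> hd es \<and> t' \<in> last es)"

definition disconnected_in :: "'a set set \<Rightarrow> 'a \<Rightarrow> 'a \<Rightarrow> bool" where
  "disconnected_in E t t' \<longleftrightarrow> \<not> connected_in E t t'"

definition Int_sets :: "'a set \<Rightarrow> 'a set set \<Rightarrow> 'a set set" where
  "Int_sets T E = {T \<inter> e | e. e \<in> E}"

definition matryoshka :: "'a set set \<Rightarrow> bool" where
  "matryoshka S \<longleftrightarrow> (\<forall>A \<in> S. \<forall>B \<in> S. A \<noteq> B \<longrightarrow> A \<subset> B \<or> B \<subset> A)"

end

theory Submission
  imports Defs
begin

text \<open>
  Every interpretation satisfies the Frechet inequality
  \<open>P(Q \<union> {t}) \<ge> P(Q) + p(t) - 1\<close>, which gives the lower bound by induction on \<open>T\<close>.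
  For tightness the tuples of \<open>T\<close> are added one at a time, each time turning a model that
  attains the bound for \<open>Q\<close> into one that attains it for \<open>Q \<union> {t}\<close>: worlds containing
  \<open>Q\<close> and \<open>t\<close> (total mass \<open>x\<close>) are paired with worlds missing \<open>t\<close> and part of \<open>Q\<close>
  (total mass \<open>y\<close>), and the two worlds of a pair exchange their parts on a set \<open>C \<ni> t\<close>
  disjoint from \<open>Q\<close>. This keeps every tuple marginal and lowers \<open>P(Q \<union> {t})\<close> by
  \<open>min x y\<close>, leaving exactly \<open>max 0 (P(Q) + p(t) - 1)\<close>. The exchanged worlds remain
  consistent if \<open>C\<close> is the connected component of \<open>t\<close> in the conflict hypergraph
  (disconnected case), or if \<open>C = {t}\<close> for a \<open>t\<close> lying only in hyperedges that contain
  all the tuples still to be added (matryoshka case).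
\<close>

section \<open>Exchanging mass between paired worlds\<close>

text \<open>Each pair \<open>(a, b) \<in> A \<times> B\<close>, weighted by \<open>c * Pr a * Pr b\<close>, is replaced by the
  pair \<open>(f a b, g a b)\<close>.\<close>
definition exchange :: "real \<Rightarrow> ('w \<Rightarrow> real) \<Rightarrow> 'w set \<Rightarrow> 'w set
    \<Rightarrow> ('w \<Rightarrow> 'w \<Rightarrow> 'w) \<Rightarrow> ('w \<Rightarrow> 'w \<Rightarrow> 'w) \<Rightarrow> 'w \<Rightarrow> real" where
  "exchange c Pr A B f g v = Pr v + c *
     (\<Sum>a\<in>A. \<Sum>b\<in>B. Pr a * Pr b *
        (of_bool (f a b = v) + of_bool (g a b = v) - of_bool (a = v) - of_bool (b = v)))"

lemma sum_mult_exchange: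
  fixes \<phi> :: "'w \<Rightarrow> real"
  assumes W: "finite W" "A \<subseteq> W" "B \<subseteq> W"
    and fg: "\<And>a b. a \<in> A \<Longrightarrow> b \<in> B \<Longrightarrow> f a b \<in> W \<and> g a b \<in> W"
  shows "(\<Sum>v\<in>W. \<phi> v * exchange c Pr A B f g v) = (\<Sum>v\<in>W. \<phi> v * Pr v)
    + c * (\<Sum>a\<in>A. \<Sum>b\<in>B. Pr a * Pr b * (\<phi> (f a b) + \<phi> (g a b) - \<phi> a - \<phi> b))"
proof -
  let ?I = "\<lambda>a b v. of_bool (f a b = v) + of_bool (g a b = v) - of_bool (a = v) - of_bool (b = v)"
  have delta: "(\<Sum>v\<in>W. \<phi> v * ?I a b v) = \<phi> (f a b) + \<phi> (g a b) - \<phi> a - \<phi> b"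
    if "a \<in> A" "b \<in> B" for a b
    using W fg[OF that] that
    by (auto simp: algebra_simps sum.distrib sum_subtractf sum.delta' subsetD)
  have "(\<Sum>v\<in>W. \<phi> v * (\<Sum>a\<in>A. \<Sum>b\<in>B. Pr a * Pr b * ?I a b v))
      = (\<Sum>v\<in>W. \<Sum>a\<in>A. \<Sum>b\<in>B. Pr a * Pr b * (\<phi> v * ?I a b v))"
    by (simp add: sum_distrib_left mult.left_commute)
  also have "\<dots> = (\<Sum>a\<in>A. \<Sum>b\<in>B. Pr a * Pr b * (\<Sum>v\<in>W. \<phi> v * ?I a b v))"
    by (subst sum.swap, subst sum.swap) (simp add: sum_distrib_left)
  also have "\<dots> = (\<Sum>a\<in>A. \<Sum>b\<in>B. Pr a * Pr b * (\<phi> (f a b) + \<phi> (g a b) - \<phi> a - \<phi> b))"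
    using delta by simp
  finally show ?thesis
    unfolding exchange_def by (simp add: distrib_left sum.distrib mult.left_commute[of "\<phi> _"]
        flip: sum_distrib_left)
qed

lemma exchange_nonneg:
  assumes fin: "finite A" "finite B" and disj: "A \<inter> B = {}"
    and nonneg: "\<And>u. u \<in> A \<union> B \<Longrightarrow> 0 \<le> Pr u" "0 \<le> Pr v" "0 \<le> c"
    and small: "c * sum Pr A \<le> 1" "c * sum Pr B \<le> 1"
  shows "0 \<le> exchange c Pr A B f g v"
proof -
  let ?out = "of_bool (v \<in> A) * Pr v * sum Pr B + of_bool (v \<in> B) * Pr v * sum Pr A"
  have "(\<Sum>a\<in>A. \<Sum>b\<in>B. Pr a * Pr b * of_bool (a = v)) = of_bool (v \<in> A) * Pr v * sum Pr B"
    using fin(1) by (simp add: sum.delta' flip: sum_distrib_left sum_distrib_right)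
  moreover have "(\<Sum>a\<in>A. \<Sum>b\<in>B. Pr a * Pr b * of_bool (b = v)) = of_bool (v \<in> B) * Pr v * sum Pr A"
    using fin(2) by (simp add: sum.delta' mult.commute flip: sum_distrib_left sum_distrib_right)
  ultimately have out: "(\<Sum>a\<in>A. \<Sum>b\<in>B. Pr a * Pr b * (of_bool (a = v) + of_bool (b = v))) = ?out"
    by (simp add: distrib_left sum.distrib)
  have K: "(\<Sum>a\<in>A. \<Sum>b\<in>B. Pr a * Pr b *
        (of_bool (f a b = v) + of_bool (g a b = v) - of_bool (a = v) - of_bool (b = v)))
      = (\<Sum>a\<in>A. \<Sum>b\<in>B. Pr a * Pr b * (of_bool (f a b = v) + of_bool (g a b = v))) - ?out"
    unfolding out[symmetric] by (simp add: diff_diff_eq right_diff_distrib flip: sum_subtractf)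
  have "0 \<le> (\<Sum>a\<in>A. \<Sum>b\<in>B. Pr a * Pr b * (of_bool (f a b = v) + of_bool (g a b = v)))"
    using nonneg by (intro sum_nonneg) auto
  then have "Pr v - c * ?out \<le> exchange c Pr A B f g v"
    unfolding exchange_def K using \<open>0 \<le> c\<close> by (simp add: right_diff_distrib)
  moreover have "c * ?out \<le> Pr v"
    using disj nonneg(2) mult_right_mono[OF small(1) \<open>0 \<le> Pr v\<close>] mult_right_mono[OF small(2) \<open>0 \<le> Pr v\<close>]
    by (auto simp: mult_ac)
  ultimately show ?thesis
    by linarith
qed

lemma exchange_support:
  assumes "exchange c Pr A B f g v \<noteq> 0"
  shows "Pr v \<noteq> 0 \<or> (\<exists>a\<in>A. \<exists>b\<in>B. Pr a \<noteq> 0 \<and> Pr b \<noteq> 0 \<and> (f a b = v \<or> g a b = v))"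
  using assms unfolding exchange_def by (force intro!: sum.neutral)

lemma violates_IC_mono: "violates_IC w IC \<Longrightarrow> w \<subseteq> w' \<Longrightarrow> violates_IC w' IC"
  unfolding violates_IC_def violates_def by fast

lemma finite_hyperedges: "finite D \<Longrightarrow> finite (hyperedges D IC)"
  unfolding hyperedges_def conflicting_set_def by (rule finite_subset[of _ "Pow D"]) auto

lemma violates_IC_iff_hyperedge:
  assumes "finite D" "w \<subseteq> D"
  shows "violates_IC w IC \<longleftrightarrow> (\<exists>X\<in>hyperedges D IC. X \<subseteq> w)"
proof
  assume "violates_IC w IC"
  let ?F = "{X. X \<subseteq> w \<and> forces_violation D IC X}"
  have "w \<in> ?F"
    unfolding forces_violation_def using \<open>violates_IC w IC\<close> violates_IC_mono by blast
  moreover have "finite ?F"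
    using assms finite_subset by fastforce
  ultimately obtain X where "X \<in> ?F" and minimal: "\<forall>Y\<in>?F. Y \<subseteq> X \<longrightarrow> X = Y"
    using finite_has_minimal[of ?F] by blast
  then have "X \<subseteq> w" "conflicting_set D IC X"
    unfolding conflicting_set_def using assms(2) by auto
  then show "\<exists>X\<in>hyperedges D IC. X \<subseteq> w"
    unfolding hyperedges_def by blast
next
  assume "\<exists>X\<in>hyperedges D IC. X \<subseteq> w"
  then show "violates_IC w IC"
    using assms(2) unfolding hyperedges_def conflicting_set_def forces_violation_def by blast
qed

lemma connected_in_extend:
  assumes "connected_in E t s" "X \<in> E" "s \<in> X" "u \<in> X"
  shows "connected_in E t u"
proof -
  obtain es where es: "es \<noteq> []" "distinct es" "set es \<subseteq> E"
    "\<forall>i. Suc i < length es \<longrightarrow> es ! i \<inter> es ! Suc i \<noteq> {}" "t \<in> hd es" "s \<in> last es"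
    using assms(1) unfolding connected_in_def by blast
  show ?thesis
  proof (cases "X \<in> set es")
    case True
    then obtain i where i: "i < length es" "es ! i = X"
      by (auto simp: in_set_conv_nth)
    have "last (take (Suc i) es) = X"
      using i by (simp add: take_Suc_conv_app_nth)
    with es i assms(4) show ?thesis
      unfolding connected_in_def
      by (intro exI[of _ "take (Suc i) es"]) (auto dest: in_set_takeD simp: hd_take)
  next
    case False
    have "(es @ [X]) ! i \<inter> (es @ [X]) ! Suc i \<noteq> {}" if "Suc i < length (es @ [X])" for i
    proof (cases "Suc i < length es")
      case True
      then show ?thesis using es(4) by (simp add: nth_append)
    next
      case False
      with that have "i = length es - 1"
        by simp
      then have "(es @ [X]) ! i = last es" "(es @ [X]) ! Suc i = X"
        using es(1) by (auto simp: nth_append last_conv_nth)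
      then show ?thesis using es(6) assms(3) by auto
    qed
    moreover have "distinct (es @ [X])" "set (es @ [X]) \<subseteq> E" "t \<in> hd (es @ [X])"
      using es False assms(2) by auto
    ultimately show ?thesis
      unfolding connected_in_def using assms(4) by (intro exI[of _ "es @ [X]"]) simp
  qed
qed

lemma connected_component_closed:
  assumes "X \<in> E" "s \<in> X" "s \<in> insert t {s. connected_in E t s}"
  shows "X \<subseteq> insert t {s. connected_in E t s}"
proof
  fix u assume "u \<in> X"
  show "u \<in> insert t {s. connected_in E t s}"
  proof (cases "s = t")
    case True
    then have "connected_in E t u"
      unfolding connected_in_def using assms \<open>u \<in> X\<close> by (intro exI[of _ "[X]"]) auto
    then show ?thesis by simp
  next
    case False
    then show ?thesis
      using assms \<open>u \<in> X\<close> connected_in_extend by fastforce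
  qed
qed

lemma matryoshka_Int_sets_subset:
  assumes "matryoshka (Int_sets T E)" "S \<subseteq> T"
  shows "matryoshka (Int_sets S E)"
  unfolding matryoshka_def
proof (intro ballI impI)
  fix A B assume "A \<in> Int_sets S E" "B \<in> Int_sets S E" "A \<noteq> B"
  then obtain e1 e2 where e: "e1 \<in> E" "e2 \<in> E" "A = S \<inter> e1" "B = S \<inter> e2"
    unfolding Int_sets_def by blast
  have restrict: "S \<inter> e = S \<inter> (T \<inter> e)" for e
    using \<open>S \<subseteq> T\<close> by blast
  have "T \<inter> e1 \<in> Int_sets T E" "T \<inter> e2 \<in> Int_sets T E"
    using e unfolding Int_sets_def by auto
  moreover have "T \<inter> e1 \<noteq> T \<inter> e2"
    using e \<open>A \<noteq> B\<close> restrict by metis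
  ultimately have "T \<inter> e1 \<subset> T \<inter> e2 \<or> T \<inter> e2 \<subset> T \<inter> e1"
    using assms(1) unfolding matryoshka_def by simp
  then have "A \<subseteq> B \<or> B \<subseteq> A"
    unfolding e using restrict by (metis Int_mono order_refl psubset_imp_subset)
  with \<open>A \<noteq> B\<close> show "A \<subset> B \<or> B \<subset> A"
    by blast
qed

lemma matryoshka_Int_sets_exists_outermost:
  assumes "finite E" "finite S" "S \<noteq> {}" "matryoshka (Int_sets S E)"
  obtains t where "t \<in> S" "\<And>e. e \<in> E \<Longrightarrow> t \<in> e \<Longrightarrow> S \<subseteq> e"
proof -
  define n where "n t = card {e \<in> E. t \<in> e}" for t
  obtain t where "t \<in> S" and t_min: "\<And>s. s \<in> S \<Longrightarrow> n t \<le> n s"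
    using ex_is_arg_min_if_finite[OF assms(2,3), of n] unfolding is_arg_min_def by (metis not_le)
  have "S \<subseteq> e" if "e \<in> E" "t \<in> e" for e
  proof (rule ccontr)
    assume "\<not> S \<subseteq> e"
    then obtain s where s: "s \<in> S" "s \<notin> e" by blast
    have "S \<inter> e \<subset> S \<inter> e'" if "e' \<in> E" "s \<in> e'" for e'
    proof -
      have "S \<inter> e \<in> Int_sets S E" "S \<inter> e' \<in> Int_sets S E" "S \<inter> e \<noteq> S \<inter> e'"
        using \<open>e \<in> E\<close> that s unfolding Int_sets_def by auto
      then have "S \<inter> e \<subset> S \<inter> e' \<or> S \<inter> e' \<subset> S \<inter> e"
        using assms(4) unfolding matryoshka_def by simp
      with s that show ?thesis by blast
    qed
    then have "{e \<in> E. s \<in> e} \<subset> {e \<in> E. t \<in> e}"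
      using \<open>t \<in> S\<close> \<open>t \<in> e\<close> \<open>e \<in> E\<close> s by blast
    then have "n s < n t"
      unfolding n_def using assms(1) by (simp add: psubset_card_mono)
    with t_min[OF \<open>s \<in> S\<close>] show False by simp
  qed
  with \<open>t \<in> S\<close> that show ?thesis by blast
qed

section \<open>The Frechet bound\<close>

definition prob_contains :: "('a set \<Rightarrow> real) \<Rightarrow> 'a set \<Rightarrow> 'a set \<Rightarrow> real" where
  "prob_contains Pr D X = (\<Sum>w\<in>{w\<in>Pow D. X \<subseteq> w}. Pr w)"

lemma prob_contains_of_bool:
  "finite D \<Longrightarrow> prob_contains Pr D X = (\<Sum>w\<in>Pow D. of_bool (X \<subseteq> w) * Pr w)"
  unfolding prob_contains_def by (simp add: Int_def)

lemma interpretation_marginal: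
  assumes "is_interpretation D p Pr" "finite D" "t \<in> D"
  shows "p t = (\<Sum>w\<in>Pow D. of_bool (t \<in> w) * Pr w)"
  using assms unfolding is_interpretation_def by (simp add: Int_def)

lemma prob_contains_nonneg: "is_interpretation D p Pr \<Longrightarrow> 0 \<le> prob_contains Pr D X"
  unfolding is_interpretation_def prob_contains_def by (auto intro: sum_nonneg)

lemma prob_contains_empty: "is_interpretation D p Pr \<Longrightarrow> prob_contains Pr D {} = 1"
  unfolding is_interpretation_def prob_contains_def by (simp add: Pow_def)

lemma prob_contains_insert_lower_bound:
  assumes Pr: "is_interpretation D p Pr" and "finite D" "t \<in> D"
  shows "prob_contains Pr D X + p t - 1 \<le> prob_contains Pr D (insert t X)"
proof -
  have "prob_contains Pr D X + p t - 1
      = (\<Sum>w\<in>Pow D. (of_bool (X \<subseteq> w) + of_bool (t \<in> w) - 1) * Pr w)"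
    using Pr assms(2,3) unfolding prob_contains_of_bool[OF assms(2)] interpretation_marginal[OF assms]
    by (simp add: is_interpretation_def algebra_simps sum.distrib sum_subtractf)
  also have "\<dots> \<le> (\<Sum>w\<in>Pow D. of_bool (insert t X \<subseteq> w) * Pr w)"
    using Pr unfolding is_interpretation_def by (intro sum_mono mult_right_mono) auto
  finally show ?thesis
    unfolding prob_contains_of_bool[OF assms(2)] .
qed

lemma frechet_lower_bound:
  assumes "is_interpretation D p Pr" "finite D" "S \<subseteq> D"
  shows "(\<Sum>t\<in>S. p t) - real (card S) + 1 \<le> prob_contains Pr D S"
proof -
  have "finite S"
    using assms(2,3) finite_subset by blast
  from this assms(3) show ?thesis
  proof (induction S rule: finite_induct)
    case empty
    then show ?case using prob_contains_empty[OF assms(1)] by simp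
  next
    case (insert t S)
    then show ?case
      using prob_contains_insert_lower_bound[OF assms(1,2), of t S] by simp
  qed
qed

section \<open>Attaining the bound\<close>

lemma is_model_exchange:
  fixes D :: "('r, 'v::linorder) tuple set" and IC :: "('r, 'x, 'v) denial set"
  assumes model: "is_model D p IC Pr" and "finite D"
    and AB: "A \<subseteq> Pow D" "B \<subseteq> Pow D" "A \<inter> B = {}"
    and c: "0 \<le> c" "c * sum Pr A \<le> 1" "c * sum Pr B \<le> 1"
    and fg_tuples: "\<And>a b. a \<in> A \<Longrightarrow> b \<in> B \<Longrightarrow> f a b \<union> g a b = a \<union> b \<and> f a b \<inter> g a b = a \<inter> b"
    and fg_consistent: "\<And>a b. a \<in> A \<Longrightarrow> b \<in> B \<Longrightarrow> \<not> violates_IC a IC \<Longrightarrow> \<not> violates_IC b IC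
      \<Longrightarrow> \<not> violates_IC (f a b) IC \<and> \<not> violates_IC (g a b) IC"
  shows "is_model D p IC (exchange c Pr A B f g)"
proof -
  let ?Pr' = "exchange c Pr A B f g"
  have Pr: "is_interpretation D p Pr"
    using model unfolding is_model_def by blast
  have fin: "finite (Pow D)" "finite A" "finite B"
    using \<open>finite D\<close> AB(1,2) by (auto intro: finite_subset)
  have fg_worlds: "f a b \<in> Pow D \<and> g a b \<in> Pow D" if "a \<in> A" "b \<in> B" for a b
    using fg_tuples[OF that] AB that by blast
  have expectation: "(\<Sum>w\<in>Pow D. \<phi> w * ?Pr' w) = (\<Sum>w\<in>Pow D. \<phi> w * Pr w)
      + c * (\<Sum>a\<in>A. \<Sum>b\<in>B. Pr a * Pr b * (\<phi> (f a b) + \<phi> (g a b) - \<phi> a - \<phi> b))" for \<phi>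
    by (rule sum_mult_exchange[OF fin(1) AB(1,2)]) (use fg_worlds in blast)
  have "(\<Sum>w\<in>Pow D. ?Pr' w) = 1"
    using expectation[of "\<lambda>_. 1"] Pr unfolding is_interpretation_def by simp
  moreover have "0 \<le> ?Pr' w" if "w \<in> Pow D" for w
    using Pr AB that unfolding is_interpretation_def
    by (intro exchange_nonneg fin(2,3) c) auto
  moreover have "(\<Sum>w\<in>{w\<in>Pow D. s \<in> w}. ?Pr' w) = p s" if "s \<in> D" for s
  proof -
    have "of_bool (s \<in> f a b) + of_bool (s \<in> g a b) - of_bool (s \<in> a) - of_bool (s \<in> b) = (0::real)"
      if "a \<in> A" "b \<in> B" for a b
    proof -
      have "s \<in> f a b \<union> g a b \<longleftrightarrow> s \<in> a \<union> b" "s \<in> f a b \<inter> g a b \<longleftrightarrow> s \<in> a \<inter> b"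
        using fg_tuples[OF that] by simp_all
      then show ?thesis
        by (cases "s \<in> a"; cases "s \<in> b"; cases "s \<in> f a b"; cases "s \<in> g a b") simp_all
    qed
    then have "(\<Sum>w\<in>Pow D. of_bool (s \<in> w) * ?Pr' w) = p s"
      using expectation[of "\<lambda>w. of_bool (s \<in> w)"] interpretation_marginal[OF Pr \<open>finite D\<close> that]
      by simp
    then show ?thesis
      using fin(1) by (simp add: Int_def)
  qed
  moreover have "?Pr' w = 0" if "w \<in> Pow D" "violates_IC w IC" for w
  proof (rule ccontr)
    assume "?Pr' w \<noteq> 0"
    then consider "Pr w \<noteq> 0"
      | a b where "a \<in> A" "b \<in> B" "Pr a \<noteq> 0" "Pr b \<noteq> 0" "f a b = w \<or> g a b = w"
      using exchange_support[OF \<open>?Pr' w \<noteq> 0\<close>] by blast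
    then show False
    proof cases
      case 1
      then show False using model that unfolding is_model_def by blast
    next
      case 2
      then have "\<not> violates_IC a IC" "\<not> violates_IC b IC"
        using model AB unfolding is_model_def by blast+
      with 2 fg_consistent that show False by blast
    qed
  qed
  ultimately show ?thesis
    unfolding is_model_def is_interpretation_def by blast
qed

text \<open>The only property of the conflict hypergraph that the construction uses.\<close>
definition swappable :: "('r, 'v::linorder) tuple set \<Rightarrow> ('r, 'x, 'v) denial set
    \<Rightarrow> ('r, 'v) tuple set \<Rightarrow> ('r, 'v) tuple \<Rightarrow> ('r, 'v) tuple set \<Rightarrow> bool" where
  "swappable D IC Q t C \<longleftrightarrow> t \<in> C \<and> C \<inter> Q = {} \<and>
     (\<forall>w\<in>Pow D. \<forall>w'\<in>Pow D. Q \<subseteq> w \<longrightarrow> t \<in> w \<longrightarrow> \<not> Q \<subseteq> w' \<longrightarrow> t \<notin> w' \<longrightarrow>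
        \<not> violates_IC w IC \<longrightarrow> \<not> violates_IC w' IC \<longrightarrow>
        \<not> violates_IC (w - C \<union> w' \<inter> C) IC \<and> \<not> violates_IC (w' - C \<union> w \<inter> C) IC)"

lemma coupling_constant:
  fixes x y :: real
  assumes "0 \<le> x" "0 \<le> y"
  shows "min x y / (x * y) * x \<le> 1" "min x y / (x * y) * y \<le> 1"
    "min x y / (x * y) * (x * y) = min x y"
  using assms by (auto simp: min_def field_simps)

lemma exists_model_insert:
  fixes D :: "('r, 'v::linorder) tuple set" and IC :: "('r, 'x, 'v) denial set"
  assumes model: "is_model D p IC Pr" and "finite D" "t \<in> D" and swap: "swappable D IC Q t C"
  shows "\<exists>Pr'. is_model D p IC Pr' \<and>
    prob_contains Pr' D (insert t Q) = max 0 (prob_contains Pr D Q + p t - 1)"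
proof -
  define A where "A = {w\<in>Pow D. Q \<subseteq> w \<and> t \<in> w}"
  define B where "B = {w\<in>Pow D. \<not> Q \<subseteq> w \<and> t \<notin> w}"
  define x where "x = sum Pr A"
  define y where "y = sum Pr B"
  \<comment> \<open>the moved mass \<open>c * x * y\<close> is \<open>min x y\<close>; if \<open>x\<close> or \<open>y\<close> is \<open>0\<close>, then \<open>c = 0\<close>\<close>
  define c where "c = min x y / (x * y)"
  define f where "f a b = a - C \<union> b \<inter> C" for a b :: "('r, 'v) tuple set"
  define g where "g a b = b - C \<union> a \<inter> C" for a b :: "('r, 'v) tuple set"
  let ?Pr' = "exchange c Pr A B f g"
  have Pr: "is_interpretation D p Pr"
    using model unfolding is_model_def by blast
  have fin: "finite (Pow D)" "finite A" "finite B"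
    using \<open>finite D\<close> unfolding A_def B_def by auto
  have "0 \<le> x" "0 \<le> y"
    using Pr unfolding x_def y_def A_def B_def is_interpretation_def by (auto intro: sum_nonneg)
  note c = coupling_constant[OF this, folded c_def]
  have AB: "A \<subseteq> Pow D" "B \<subseteq> Pow D" "A \<inter> B = {}"
    unfolding A_def B_def by auto
  have fg_worlds: "f a b \<in> Pow D \<and> g a b \<in> Pow D" if "a \<in> A" "b \<in> B" for a b
    using that unfolding A_def B_def f_def g_def by auto
  have model': "is_model D p IC ?Pr'"
  proof (rule is_model_exchange[OF model \<open>finite D\<close> AB])
    show "0 \<le> c"
      unfolding c_def using \<open>0 \<le> x\<close> \<open>0 \<le> y\<close> by simp
    show "c * sum Pr A \<le> 1" "c * sum Pr B \<le> 1"
      using c unfolding x_def y_def by simp_all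
    show "f a b \<union> g a b = a \<union> b \<and> f a b \<inter> g a b = a \<inter> b" for a b
      unfolding f_def g_def by blast
    show "\<not> violates_IC (f a b) IC \<and> \<not> violates_IC (g a b) IC"
      if "a \<in> A" "b \<in> B" "\<not> violates_IC a IC" "\<not> violates_IC b IC" for a b
      using swap that unfolding swappable_def A_def B_def f_def g_def by blast
  qed
  \<comment> \<open>\<open>f a b\<close> lacks \<open>t\<close> and \<open>g a b\<close> agrees with \<open>b\<close> on \<open>Q\<close>\<close>
  have lost: "of_bool (insert t Q \<subseteq> f a b) + of_bool (insert t Q \<subseteq> g a b)
      - of_bool (insert t Q \<subseteq> a) - of_bool (insert t Q \<subseteq> b) = (-1::real)"
    if "a \<in> A" "b \<in> B" for a b
    using swap that unfolding swappable_def A_def B_def f_def g_def by auto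
  have "prob_contains ?Pr' D (insert t Q) = prob_contains Pr D (insert t Q)
      + c * (\<Sum>a\<in>A. \<Sum>b\<in>B. Pr a * Pr b * (of_bool (insert t Q \<subseteq> f a b)
        + of_bool (insert t Q \<subseteq> g a b) - of_bool (insert t Q \<subseteq> a) - of_bool (insert t Q \<subseteq> b)))"
    unfolding prob_contains_of_bool[OF \<open>finite D\<close>]
    by (rule sum_mult_exchange[OF fin(1) AB(1,2)]) (use fg_worlds in blast)
  also have "\<dots> = prob_contains Pr D (insert t Q) + c * (\<Sum>a\<in>A. \<Sum>b\<in>B. Pr a * Pr b * -1)"
    by (intro arg_cong2[where f = "\<lambda>u v. u + c * v"] refl sum.cong) (simp only: lost)
  also have "prob_contains Pr D (insert t Q) = x"
    unfolding prob_contains_def x_def A_def by (metis insert_subset)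
  also have "x + c * (\<Sum>a\<in>A. \<Sum>b\<in>B. Pr a * Pr b * -1) = x - min x y"
    using c(3) unfolding x_def y_def by (simp add: sum_product sum_negf)
  also have "x - y = prob_contains Pr D Q + p t - 1"
  proof -
    have "x - y = (\<Sum>w\<in>Pow D. (of_bool (Q \<subseteq> w \<and> t \<in> w) - of_bool (\<not> Q \<subseteq> w \<and> t \<notin> w)) * Pr w)"
      unfolding x_def y_def A_def B_def using fin(1) by (simp add: left_diff_distrib sum_subtractf Int_def)
    also have "\<dots> = (\<Sum>w\<in>Pow D. (of_bool (Q \<subseteq> w) + of_bool (t \<in> w) - 1) * Pr w)"
      by (intro sum.cong) auto
    also have "\<dots> = prob_contains Pr D Q + p t - 1"
      using Pr \<open>finite D\<close> \<open>t \<in> D\<close>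
      by (simp add: prob_contains_of_bool interpretation_marginal[OF Pr] is_interpretation_def
          algebra_simps sum.distrib sum_subtractf)
    finally show ?thesis .
  qed
  then have "x - min x y = max 0 (prob_contains Pr D Q + p t - 1)"
    by (simp add: min_def max_def)
  finally show ?thesis
    using model' by blast
qed

lemma not_violates_IC_swap:
  assumes "finite D" "w \<subseteq> D" "w' \<subseteq> D" "\<not> violates_IC w IC" "\<not> violates_IC w' IC"
    and closed: "\<And>X. X \<in> hyperedges D IC \<Longrightarrow> X \<inter> C \<noteq> {} \<Longrightarrow> X \<subseteq> C"
  shows "\<not> violates_IC (w - C \<union> w' \<inter> C) IC"
proof
  assume "violates_IC (w - C \<union> w' \<inter> C) IC"
  moreover have "w - C \<union> w' \<inter> C \<subseteq> D"
    using assms(2,3) by blast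
  ultimately obtain X where X: "X \<in> hyperedges D IC" "X \<subseteq> w - C \<union> w' \<inter> C"
    using violates_IC_iff_hyperedge[OF \<open>finite D\<close>] by blast
  then have "X \<subseteq> w \<or> X \<subseteq> w'"
    using closed[OF X(1)] by blast
  with X(1) assms(1-5) show False
    using violates_IC_iff_hyperedge by blast
qed

lemma swappable_connected_component:
  assumes "finite D" "t \<notin> Q" "\<And>s. s \<in> Q \<Longrightarrow> disconnected_in (hyperedges D IC) t s"
  shows "swappable D IC Q t (insert t {s. connected_in (hyperedges D IC) t s})"
proof -
  let ?C = "insert t {s. connected_in (hyperedges D IC) t s}"
  have closed: "X \<subseteq> ?C" if X: "X \<in> hyperedges D IC" "X \<inter> ?C \<noteq> {}" for X
  proof -
    obtain s where "s \<in> X" "s \<in> ?C"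
      using X(2) by blast
    then show ?thesis
      by (rule connected_component_closed[OF X(1)])
  qed
  have "?C \<inter> Q = {}"
    using assms(2,3) unfolding disconnected_in_def by blast
  then show ?thesis
    unfolding swappable_def using not_violates_IC_swap[OF \<open>finite D\<close> _ _ _ _ closed] by blast
qed

lemma swappable_singleton:
  assumes "finite D" "t \<notin> Q" "\<And>e. e \<in> hyperedges D IC \<Longrightarrow> t \<in> e \<Longrightarrow> insert t Q \<subseteq> e"
  shows "swappable D IC Q t {t}"
  unfolding swappable_def
proof (intro conjI ballI impI)
  fix w w' assume w: "w \<in> Pow D" "t \<in> w" "\<not> violates_IC w IC"
    and w': "w' \<in> Pow D" "\<not> Q \<subseteq> w'" "t \<notin> w'" "\<not> violates_IC w' IC"
  show "\<not> violates_IC (w - {t} \<union> w' \<inter> {t}) IC"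
    using w w' violates_IC_mono[of "w - {t} \<union> w' \<inter> {t}" IC w] by blast
  show "\<not> violates_IC (w' - {t} \<union> w \<inter> {t}) IC"
  proof
    assume "violates_IC (w' - {t} \<union> w \<inter> {t}) IC"
    moreover have "w' - {t} \<union> w \<inter> {t} \<subseteq> D"
      using w(1) w'(1) by blast
    ultimately obtain X where X: "X \<in> hyperedges D IC" "X \<subseteq> w' - {t} \<union> w \<inter> {t}"
      using violates_IC_iff_hyperedge[OF \<open>finite D\<close>] by blast
    show False
    proof (cases "t \<in> X")
      case True
      then show False using assms(2) assms(3)[OF X(1)] X(2) w'(2) by blast
    next
      case False
      then have "X \<subseteq> w'" using X(2) by blast
      then show False using violates_IC_iff_hyperedge[OF \<open>finite D\<close>] X(1) w' by blast
    qed
  qed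
qed (use assms(2) in auto)

lemma exists_swappable:
  assumes "finite D" "S \<subseteq> D" "S \<noteq> {}"
    and "pairwise (disconnected_in (hyperedges D IC)) S \<or> matryoshka (Int_sets S (hyperedges D IC))"
  shows "\<exists>t\<in>S. \<exists>C. swappable D IC (S - {t}) t C"
  using assms(4)
proof
  assume disconnected: "pairwise (disconnected_in (hyperedges D IC)) S"
  obtain t where "t \<in> S" using assms(3) by blast
  then have "swappable D IC (S - {t}) t (insert t {s. connected_in (hyperedges D IC) t s})"
    using disconnected unfolding pairwise_def
    by (intro swappable_connected_component[OF assms(1)]) auto
  with \<open>t \<in> S\<close> show ?thesis by blast
next
  assume "matryoshka (Int_sets S (hyperedges D IC))"
  moreover have "finite S"
    using assms(1,2) finite_subset by blast
  ultimately obtain t where "t \<in> S" "\<And>e. e \<in> hyperedges D IC \<Longrightarrow> t \<in> e \<Longrightarrow> S \<subseteq> e"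
    using matryoshka_Int_sets_exists_outermost finite_hyperedges[OF assms(1)] assms(3) by metis
  then have "swappable D IC (S - {t}) t {t}"
    by (intro swappable_singleton[OF assms(1)]) auto
  with \<open>t \<in> S\<close> show ?thesis by blast
qed

lemma frechet_bound_attained:
  fixes D :: "('r, 'v::linorder) tuple set" and IC :: "('r, 'x, 'v) denial set"
  assumes "pdb D p" "consistent D p IC" "S \<subseteq> D"
    and "pairwise (disconnected_in (hyperedges D IC)) S \<or> matryoshka (Int_sets S (hyperedges D IC))"
  shows "\<exists>Pr. is_model D p IC Pr \<and> prob_contains Pr D S = max 0 ((\<Sum>t\<in>S. p t) - real (card S) + 1)"
proof -
  have "finite D" and p_le_1: "\<And>t. t \<in> D \<Longrightarrow> p t \<le> 1"
    using assms(1) unfolding pdb_def by auto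
  have "finite S"
    using \<open>finite D\<close> assms(3) finite_subset by blast
  then show ?thesis
    using assms(3,4)
  proof (induction S rule: finite_remove_induct)
    case empty
    then show ?case
      using assms(2) prob_contains_empty unfolding consistent_def is_model_def by fastforce
  next
    case (remove S)
    obtain t C where "t \<in> S" and swap: "swappable D IC (S - {t}) t C"
      using exists_swappable[OF \<open>finite D\<close> remove.prems(1) remove.hyps(2) remove.prems(2)] by blast
    moreover have "pairwise (disconnected_in (hyperedges D IC)) (S - {t})
        \<or> matryoshka (Int_sets (S - {t}) (hyperedges D IC))"
      using remove.prems(2) pairwise_subset matryoshka_Int_sets_subset by blast
    ultimately obtain Pr where "is_model D p IC Pr"
      and Pr: "prob_contains Pr D (S - {t}) = max 0 ((\<Sum>t\<in>S - {t}. p t) - real (card (S - {t})) + 1)"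
      using remove.IH remove.prems(1) by blast
    moreover have "t \<in> D"
      using \<open>t \<in> S\<close> remove.prems(1) by blast
    ultimately obtain Pr' where "is_model D p IC Pr'"
      and "prob_contains Pr' D S = max 0 (prob_contains Pr D (S - {t}) + p t - 1)"
      using exists_model_insert[OF _ \<open>finite D\<close> _ swap] \<open>t \<in> S\<close> by (metis insert_Diff)
    moreover have "(\<Sum>t\<in>S. p t) = p t + (\<Sum>t\<in>S - {t}. p t)"
      using \<open>t \<in> S\<close> remove.hyps(1) by (simp add: sum.remove)
    moreover have "card S = Suc (card (S - {t}))"
      using \<open>t \<in> S\<close> remove.hyps(1) by (rule card_Suc_Diff1[symmetric, rotated])
    ultimately show ?case
      using Pr p_le_1[OF \<open>t \<in> D\<close>] by (auto simp: max_def)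
  qed
qed

theorem lemma1:
  fixes D :: "('r, 'v::linorder) tuple set"
    and p :: "('r, 'v) tuple \<Rightarrow> real"
    and IC :: "('r, 'x, 'v) denial set"
    and T :: "('r, 'v) tuple set"
  assumes "pdb D p"
    and "finite IC"
    and "consistent D p IC"
    and "T \<subseteq> D"
  shows "(((\<forall>t \<in> T. \<forall>t' \<in> T. t \<noteq> t' \<longrightarrow> disconnected_in (hyperedges D IC) t t')
            \<or> matryoshka (Int_sets T (hyperedges D IC)))
          \<longrightarrow> p_min D p IC T = max 0 ((\<Sum>t \<in> T. p t) - real (card T) + 1))
       \<and> (\<not> ((\<forall>t \<in> T. \<forall>t' \<in> T. t \<noteq> t' \<longrightarrow> disconnected_in (hyperedges D IC) t t')
            \<or> matryoshka (Int_sets T (hyperedges D IC)))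
          \<longrightarrow> max 0 ((\<Sum>t \<in> T. p t) - real (card T) + 1) \<le> p_min D p IC T)"
proof -
  let ?bound = "max 0 ((\<Sum>t \<in> T. p t) - real (card T) + 1)"
  let ?values = "{prob_contains Pr D T | Pr. is_model D p IC Pr}"
  have p_min: "p_min D p IC T = Inf ?values"
    unfolding p_min_def prob_contains_def ..
  have "finite D"
    using assms(1) unfolding pdb_def by blast
  have lower: "?bound \<le> q" if "q \<in> ?values" for q
    using that frechet_lower_bound[OF _ \<open>finite D\<close> assms(4)] prob_contains_nonneg
    unfolding is_model_def by fastforce
  have "?values \<noteq> {}"
    using assms(3) unfolding consistent_def by blast
  then have "?bound \<le> p_min D p IC T"
    unfolding p_min using lower by (rule cInf_greatest)
  moreover have "p_min D p IC T = ?bound"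
    if "pairwise (disconnected_in (hyperedges D IC)) T \<or> matryoshka (Int_sets T (hyperedges D IC))"
  proof -
    have "?bound \<in> ?values"
      using frechet_bound_attained[OF assms(1,3,4) that] by (auto intro: sym)
    then show ?thesis
      unfolding p_min using lower by (rule cInf_eq_minimum)
  qed
  ultimately show ?thesis
    unfolding pairwise_def by blast
qed

end
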